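(* Let $\alpha$, $a_n$ and the $\alpha$-sum-level sets $\mathcal L^{(\alpha)}_n$ be as in the context. Then for every $n\in\mathbb N$, \[\lambda(\mathcal L^{(\alpha)}_n)=\sum_{m=1}^n a_m\,\lambda(\mathcal L^{(\alpha)}_{n-m}).\]
   Context: Let $\mathcal U=[0,1]$, $\lambda$ Lebesgue measure. $\alpha=\{A_n:n\in\mathbb N\}$ is a countable partition of $\mathcal U$ (up to the point $0$) into left-open, right-closed intervals of positive length, ordered from right to left starting with $A_1$, accumulating only at $0$; $a_n:=\lambda(A_n)$, $t_n:=\sum_{k\ge n}a_k$, $A_n=(t_{n+1},t_n]$. $L_\alpha(x)=(t_n-x)/a_n$ on $A_n$, $L_\alpha(0)=0$. $C_\alpha(\ell_1,\dots,\ell_k):=\{x\in\mathcal U:L_\alpha^{i-1}(x)\in A_{\ell_i},\ i=1,\dots,k\}$. For $n\in\mathbb N$, $\mathcal L^{(\alpha)}_n:=\{x\in C_\alpha(\ell_1,\dots,\ell_k):\sum_{i=1}^k\ell_i=n\text{ for some }k\in\mathbb N\}$, and $\mathcal L^{(\alpha)}_0:=\mathcal U$. *)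

theory Defs
  imports "HOL-Analysis.Analysis"
begin

text \<open>The partition alpha is encoded by the sequence of lengths a 1, a 2, ...
  (the value a 0 is irrelevant). t_n = sum_{k>=n} a_k.\<close>

definition tl_sum :: "(nat \<Rightarrow> real) \<Rightarrow> nat \<Rightarrow> real" where
  "tl_sum a n = (\<Sum>k. a (k + n))"

definition part_int :: "(nat \<Rightarrow> real) \<Rightarrow> nat \<Rightarrow> real set" where
  "part_int a n = {tl_sum a (Suc n) <.. tl_sum a n}"

definition L_alpha :: "(nat \<Rightarrow> real) \<Rightarrow> real \<Rightarrow> real" where
  "L_alpha a x =
     (if \<exists>n\<ge>1. x \<in> part_int a n
      then (let n = (THE n. n \<ge> 1 \<and> x \<in> part_int a n) in (tl_sum a n - x) / a n)
      else 0)"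

definition cyl :: "(nat \<Rightarrow> real) \<Rightarrow> nat list \<Rightarrow> real set" where
  "cyl a ls = {x \<in> {0..1}. \<forall>i<length ls. (L_alpha a ^^ i) x \<in> part_int a (ls ! i)}"

definition sum_level :: "(nat \<Rightarrow> real) \<Rightarrow> nat \<Rightarrow> real set" where
  "sum_level a n =
     (if n = 0 then {0..1}
      else {x. \<exists>ls. ls \<noteq> [] \<and> (\<forall>l\<in>set ls. l \<ge> 1) \<and> sum_list ls = n \<and> x \<in> cyl a ls})"

end

theory Submission
  imports Defs
begin

text \<open>A point lies in an \<open>\<alpha>\<close>-sum-level set of level \<open>n \<ge> 1\<close> exactly when its first digit is some
  \<open>m \<le> n\<close> and its image under \<open>L\<^sub>\<alpha>\<close> lies in the level set of level \<open>n - m\<close>. This splits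
  \<open>\<L>\<^sub>n\<close> into \<open>n\<close> disjoint pieces, and on \<open>A\<^sub>m\<close> the map \<open>L\<^sub>\<alpha>\<close> is an affine bijection onto
  \<open>[0,1)\<close> with slope \<open>-1/a\<^sub>m\<close>, so the \<open>m\<close>-th piece has measure \<open>a\<^sub>m \<lambda>(\<L>\<^sub>n\<^sub>-\<^sub>m)\<close>.\<close>

definition compositions :: "nat \<Rightarrow> nat list set" where
  "compositions n = {ls. (\<forall>l\<in>set ls. 1 \<le> l) \<and> sum_list ls = n}"

lemma compositions_0: "compositions 0 = {[]}"
proof -
  have "ls = []" if "\<forall>l\<in>set ls. 1 \<le> l" "sum_list ls = 0" for ls :: "nat list"
    using that by (cases ls) auto
  then show ?thesis
    by (auto simp: compositions_def)
qed

lemma compositions_first_part: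
  assumes "1 \<le> n"
  shows "compositions n = (\<Union>m\<in>{1..n}. (#) m ` compositions (n - m))"
proof (intro equalityI subsetI)
  fix ls assume ls: "ls \<in> compositions n"
  then obtain m ls' where ls_Cons: "ls = m # ls'"
    using assms by (cases ls) (auto simp: compositions_def)
  with ls have "m \<in> {1..n}" "ls' \<in> compositions (n - m)"
    by (auto simp: compositions_def)
  with ls_Cons show "ls \<in> (\<Union>m\<in>{1..n}. (#) m ` compositions (n - m))"
    by blast
qed (auto simp: compositions_def)

lemma measure_lborel_affine_image:
  fixes S :: "real set"
  assumes S: "S \<in> sets borel" and c: "c \<noteq> 0"
  shows "(\<lambda>x. c * x + d) ` S \<in> sets borel"
    and "measure lborel ((\<lambda>x. c * x + d) ` S) = \<bar>c\<bar> * measure lborel S"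
proof -
  have "(\<lambda>x. c * x + d) ` S = (\<lambda>y. (y - d) / c) -` S"
    using c by (force simp: field_simps)
  also have "\<dots> \<in> sets borel"
    using measurable_sets_borel[of "\<lambda>y. (y - d) / c" borel S] S by measurable
  finally show image_borel: "(\<lambda>x. c * x + d) ` S \<in> sets borel" .
  have "measure lebesgue ((\<lambda>x. c *\<^sub>R x + d) ` S) = \<bar>c\<bar> ^ DIM(real) * measure lebesgue S"
    by (rule measure_lebesgue_affine)
  then show "measure lborel ((\<lambda>x. c * x + d) ` S) = \<bar>c\<bar> * measure lborel S"
    using S image_borel by simp
qed

locale interval_partition =
  fixes a :: "nat \<Rightarrow> real"
  assumes lengths_pos: "\<And>k. 1 \<le> k \<Longrightarrow> 0 < a k"
    and lengths_sums: "(\<lambda>k. a (Suc k)) sums 1"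
begin

lemma summable_shift: "summable (\<lambda>k. a (k + n))"
  using lengths_sums summable_iff_shift[of a n] summable_Suc_iff[of a]
  by (simp add: sums_iff)

lemma tl_sum_Suc: "tl_sum a n = a n + tl_sum a (Suc n)"
  using suminf_split_head[OF summable_shift[of n]] by (simp add: tl_sum_def)

lemma tl_sum_1: "tl_sum a 1 = 1"
  using lengths_sums by (simp add: tl_sum_def sums_iff)

lemma tl_sum_nonneg: "1 \<le> n \<Longrightarrow> 0 \<le> tl_sum a n"
  unfolding tl_sum_def using lengths_pos by (intro suminf_nonneg summable_shift) (simp add: less_imp_le)

lemma tl_sum_antimono:
  assumes "1 \<le> m" "m \<le> n"
  shows "tl_sum a n \<le> tl_sum a m"
  using assms(2)
proof (induction n rule: dec_induct)
  case (step n)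
  then show ?case using tl_sum_Suc[of n] lengths_pos[of n] assms(1) by simp
qed simp

lemma part_int_subset_unit: "1 \<le> m \<Longrightarrow> part_int a m \<subseteq> {0..1}"
  using tl_sum_nonneg[of "Suc m"] tl_sum_antimono[of 1 m] tl_sum_1
  by (auto simp: part_int_def)

lemma part_int_disjoint:
  assumes "1 \<le> m" "1 \<le> n" "m \<noteq> n"
  shows "part_int a m \<inter> part_int a n = {}"
proof -
  have "part_int a i \<inter> part_int a j = {}" if "1 \<le> i" "i < j" for i j
    using tl_sum_antimono[of "Suc i" j] that by (auto simp: part_int_def)
  with assms show ?thesis
    by (metis Int_commute linorder_neqE_nat)
qed

lemma L_alpha_part_int:
  assumes m: "1 \<le> m" and x: "x \<in> part_int a m"
  shows "L_alpha a x = (tl_sum a m - x) / a m"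
proof -
  have "(THE n. 1 \<le> n \<and> x \<in> part_int a n) = m"
    using part_int_disjoint[of m] m x by (intro the_equality) blast+
  with m x show ?thesis by (auto simp: L_alpha_def)
qed

lemma L_alpha_part_int_range:
  assumes "1 \<le> m" "x \<in> part_int a m"
  shows "L_alpha a x \<in> {0..<1}"
  using L_alpha_part_int[OF assms] tl_sum_Suc[of m] lengths_pos[of m] assms
  by (simp add: part_int_def)

lemma L_alpha_unit: "L_alpha a x \<in> {0..1}"
proof (cases "\<exists>m\<ge>1. x \<in> part_int a m")
  case True
  then show ?thesis
    using L_alpha_part_int_range by fastforce
next
  case False
  then have "L_alpha a x = 0"
    unfolding L_alpha_def by (simp only: if_False)
  then show ?thesis
    by simp
qed

lemma cyl_Nil: "cyl a [] = {0..1}"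
  by (auto simp: cyl_def)

lemma cyl_Cons:
  assumes "1 \<le> m"
  shows "cyl a (m # ls) = part_int a m \<inter> L_alpha a -` cyl a ls"
  using part_int_subset_unit[OF assms] L_alpha_unit
  by (auto simp: cyl_def less_Suc_eq_0_disj funpow_Suc_right simp del: funpow.simps)

lemma sum_level_compositions: "sum_level a n = (\<Union>ls\<in>compositions n. cyl a ls)"
proof (cases "n = 0")
  case False
  then have "ls \<in> compositions n \<Longrightarrow> ls \<noteq> []" for ls
    by (auto simp: compositions_def)
  with False show ?thesis
    by (auto simp: sum_level_def compositions_def)
qed (simp add: sum_level_def compositions_0 cyl_Nil)

lemma sum_level_first_digit:
  assumes "1 \<le> n"
  shows "sum_level a n = (\<Union>m\<in>{1..n}. part_int a m \<inter> L_alpha a -` sum_level a (n - m))"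
  by (auto simp: sum_level_compositions compositions_first_part[OF assms] cyl_Cons)

lemma sum_level_subset_unit: "sum_level a n \<subseteq> {0..1}"
  by (auto simp: sum_level_def cyl_def)

text \<open>The point \<open>1\<close> is removed because \<open>L_alpha a\<close> maps each interval onto \<open>{0..<1}\<close>.\<close>

lemma part_int_vimage_L_alpha:
  assumes m: "1 \<le> m" and S: "S \<subseteq> {0..1}"
  shows "part_int a m \<inter> L_alpha a -` S = (\<lambda>y. - a m * y + tl_sum a m) ` (S - {1})"
proof (intro equalityI subsetI)
  fix x assume x: "x \<in> part_int a m \<inter> L_alpha a -` S"
  then have "L_alpha a x \<in> S - {1}"
    using L_alpha_part_int_range[OF m] by fastforce
  moreover have "x = - a m * L_alpha a x + tl_sum a m"
    using x L_alpha_part_int[OF m] lengths_pos[OF m] by simp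
  ultimately show "x \<in> (\<lambda>y. - a m * y + tl_sum a m) ` (S - {1})"
    by blast
next
  fix x assume "x \<in> (\<lambda>y. - a m * y + tl_sum a m) ` (S - {1})"
  then obtain y where y: "y \<in> S" "y \<noteq> 1" and x: "x = - a m * y + tl_sum a m"
    by blast
  have "0 \<le> y" "y < 1"
    using y S by force+
  then have x_part: "x \<in> part_int a m"
    using x tl_sum_Suc[of m] lengths_pos[OF m] mult_strict_left_mono[of y 1 "a m"]
    by (auto simp: part_int_def)
  have "L_alpha a x = y"
    using L_alpha_part_int[OF m x_part] x lengths_pos[OF m] by simp
  with x_part y show "x \<in> part_int a m \<inter> L_alpha a -` S"
    by simp
qed

lemma sum_level_borel: "sum_level a n \<in> sets borel"
proof (induction n rule: less_induct)
  case (less n)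
  show ?case
  proof (cases "n = 0")
    case False
    have "(\<lambda>y. - a m * y + tl_sum a m) ` (sum_level a (n - m) - {1}) \<in> sets borel"
      if "m \<in> {1..n}" for m
      using that False less lengths_pos[of m] by (intro measure_lborel_affine_image) auto
    then show ?thesis
      using False sum_level_subset_unit
      by (auto simp: sum_level_first_digit part_int_vimage_L_alpha)
  qed (simp add: sum_level_def)
qed

lemma measure_part_int_vimage_sum_level:
  assumes "1 \<le> m"
  shows "measure lborel (part_int a m \<inter> L_alpha a -` sum_level a k)
    = a m * measure lborel (sum_level a k)"
proof -
  have S: "sum_level a k - {1} \<in> sets borel"
    using sum_level_borel by auto
  have "measure lborel (sum_level a k - {1}) = measure lborel (sum_level a k)"
    using sum_level_borel by (intro measure_Diff_null_set) auto
  then show ?thesis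
    using measure_lborel_affine_image(2)[OF S, of "- a m" "tl_sum a m"] lengths_pos[OF assms]
    by (simp add: part_int_vimage_L_alpha[OF assms sum_level_subset_unit])
qed

lemma measure_sum_level:
  assumes n: "1 \<le> n"
  shows "measure lborel (sum_level a n) = (\<Sum>m=1..n. a m * measure lborel (sum_level a (n - m)))"
proof -
  define P where "P m = part_int a m \<inter> L_alpha a -` sum_level a (n - m)" for m
  have P_borel: "P m \<in> sets lborel" if "m \<in> {1..n}" for m
  proof -
    have "1 \<le> m"
      using that by simp
    then show ?thesis
      unfolding P_def part_int_vimage_L_alpha[OF \<open>1 \<le> m\<close> sum_level_subset_unit] sets_lborel
      using sum_level_borel lengths_pos[of m] by (intro measure_lborel_affine_image(1)) auto
  qed
  have P_finite: "emeasure lborel (P m) \<noteq> \<infinity>" if "m \<in> {1..n}" for m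
  proof -
    have "emeasure lborel (P m) \<le> emeasure lborel {0..1::real}"
      using that part_int_subset_unit[of m] by (intro emeasure_mono) (auto simp: P_def)
    then show ?thesis
      by (auto simp: top_unique)
  qed
  have "disjoint_family_on P {1..n}"
    using part_int_disjoint by (fastforce simp: disjoint_family_on_def P_def)
  then have "measure lborel (\<Union>m\<in>{1..n}. P m) = (\<Sum>m=1..n. measure lborel (P m))"
    using P_borel P_finite by (intro measure_finite_Union) auto
  then show ?thesis
    using sum_level_first_digit[OF n] measure_part_int_vimage_sum_level
    by (simp add: P_def)
qed

end

theorem lemma3p1:
  fixes a :: "nat \<Rightarrow> real" and n :: nat
  assumes "\<forall>k\<ge>1. a k > 0"
    and "(\<lambda>k. a (Suc k)) sums 1"
    and "n \<ge> 1"
  shows "measure lborel (sum_level a n) = (\<Sum>m=1..n. a m * measure lborel (sum_level a (n - m)))"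
proof -
  interpret interval_partition a
    using assms(1,2) by unfold_locales auto
  show ?thesis
    using measure_sum_level[OF assms(3)] .
qed

end
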